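(* Let $A$ be a synaptic algebra, let $p,q\in P$ be arbitrary projections, and let $c:=(pqp+p^{\perp}q^{\perp}p^{\perp})^{1/2}$ and $s:=(pq^{\perp}p+p^{\perp}qp^{\perp})^{1/2}$. Let $k$ be the symmetry of the polar decomposition of $pqp^{\perp}+p^{\perp}qp\in A$, so that $pqp^{\perp}+p^{\perp}qp=csk=kcs$ (here $cs=|pqp^{\perp}+p^{\perp}qp|$). Then \[ q=c^{2}p+csk+s^{2}p^{\perp}, \] where $pqp=c^{2}p=pc^{2}$, $p^{\perp}qp^{\perp}=s^{2}p^{\perp}=p^{\perp}s^{2}$, $pqp^{\perp}+p^{\perp}qp=csk$, $k$ is a symmetry, $cCs$, $cCk$, $sCk$, and $k\in CC(pqp^{\perp}+p^{\perp}qp)$.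
   Context: Synaptic algebra (Foulis): $R$ is a real linear associative algebra with unit $1$, and $A\subseteq R$ is a real linear subspace with $1\in A$. For $a,b\in A$ write $aCb$ iff $ab=ba$; $C(a):=\{b\in A: aCb\}$; $CC(a):=\{b\in A: bCd \text{ for all } d\in C(a)\}$. $A$ is a synaptic algebra with enveloping algebra $R$ iff: (SA1) $A$ is a partially ordered archimedean real linear space with positive cone $A^+=\{a\in A:0\le a\}$, $1$ is an order unit, and $\|\cdot\|$ is the corresponding order-unit norm; (SA2) $a\in A\Rightarrow a^2\in A^+$; (SA3) $a,b\in A^+\Rightarrow aba\in A^+$; (SA4) if $a\in A$, $b\in A^+$ and $aba=0$ then $ab=ba=0$; (SA5) if $a\in A^+$ there is $b\in A^+\cap CC(a)$ with $b^2=a$; (SA6) for $a\in A$ there is $p\in A$ with $p=p^2$ and, for all $b\in A$, $ab=0\Leftrightarrow pb=0$; (SA7) if $1\le a\in A$ there is $b\in A$ with $ab=ba=1$; (SA8) if $a,b\in A$, $a_1\le a_2\le\cdots$ are pairwise commuting elements of $C(b)$ and $\|a-a_n\|\to0$, then $a\in C(b)$. $A$ is assumed nondegenerate ($1\ne0$). Products are computed in $R$ (for $a,b,d\in A$ one has $aba\in A$, $ab+ba\in A$, and $ab\in A$ when $aCb$). $P:=\{p\in A:p=p^2\}$ is the set of projections, partially ordered by the restriction of $\le$; it is an orthomodular lattice with orthocomplement $p^{\perp}:=1-p$, meet $\wedge$, join $\vee$. For $0\le a$, $a^{1/2}$ is the unique $b\in A^+$ with $b^2=a$, and $|a|:=(a^2)^{1/2}$.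 The carrier $a^{\circ}$ of $a\in A$ is the unique projection such that for all $b\in A$, $ab=0\Leftrightarrow a^{\circ}b=0$. A symmetry is $u\in A$ with $u^2=1$. For $a\in A$, the signum of $a$ is the partial symmetry $t\in A$ with $t^2=a^{\circ}$, $t\in CC(a)$, $a=|a|t=t|a|$; the symmetry of the polar decomposition of $a$ is $u:=t+(a^{\circ})^{\perp}$, which satisfies $u^2=1$, $u\in CC(a)$, $a=|a|u=u|a|$, $|a|=ua=au$. *)

theory Defs
  imports Main "HOL.Real_Vector_Spaces"
begin

text \<open>Synaptic algebras (Foulis). The enveloping algebra R is the whole type
'a (a real associative algebra with unit); A is a subset of it; le is the
partial order on A (only relating elements of A).\<close>

definition sa_C :: "'a::real_algebra_1 set \<Rightarrow> 'a \<Rightarrow> 'a set" where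
  "sa_C A a = {b \<in> A. a * b = b * a}"

definition sa_CC :: "'a::real_algebra_1 set \<Rightarrow> 'a \<Rightarrow> 'a set" where
  "sa_CC A a = {b \<in> A. \<forall>d \<in> sa_C A a. b * d = d * b}"

definition sa_norm :: "'a::real_algebra_1 set \<Rightarrow> ('a \<Rightarrow> 'a \<Rightarrow> bool) \<Rightarrow> 'a \<Rightarrow> real" where
  "sa_norm A le a = Inf {r::real. 0 < r \<and> le (- (r *\<^sub>R 1)) a \<and> le a (r *\<^sub>R 1)}"

definition synaptic_algebra :: "'a::real_algebra_1 set \<Rightarrow> ('a \<Rightarrow> 'a \<Rightarrow> bool) \<Rightarrow> bool" where
  "synaptic_algebra A le \<longleftrightarrow>
     \<comment> \<open>A is a real linear subspace of R containing 1\<close>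
     0 \<in> A \<and> 1 \<in> A \<and> (\<forall>a\<in>A. \<forall>b\<in>A. a + b \<in> A) \<and> (\<forall>a\<in>A. \<forall>r::real. r *\<^sub>R a \<in> A)
     \<comment> \<open>nondegenerate\<close>
   \<and> (1::'a) \<noteq> 0
     \<comment> \<open>(SA1) partially ordered real linear space\<close>
   \<and> (\<forall>a b. le a b \<longrightarrow> a \<in> A \<and> b \<in> A)
   \<and> (\<forall>a\<in>A. le a a)
   \<and> (\<forall>a b. le a b \<and> le b a \<longrightarrow> a = b)
   \<and> (\<forall>a b c. le a b \<and> le b c \<longrightarrow> le a c)
   \<and> (\<forall>a b c. le a b \<and> c \<in> A \<longrightarrow> le (a + c) (b + c))
   \<and> (\<forall>a b (r::real). le a b \<and> 0 \<le> r \<longrightarrow> le (r *\<^sub>R a) (r *\<^sub>R b))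
     \<comment> \<open>(SA1) archimedean\<close>
   \<and> (\<forall>a\<in>A. \<forall>b\<in>A. (\<forall>n::nat. le (real n *\<^sub>R a) b) \<longrightarrow> le a 0)
     \<comment> \<open>(SA1) 1 is an order unit\<close>
   \<and> (\<forall>a\<in>A. \<exists>r::real. le a (r *\<^sub>R 1))
     \<comment> \<open>(SA2)\<close>
   \<and> (\<forall>a\<in>A. le 0 (a * a))
     \<comment> \<open>(SA3)\<close>
   \<and> (\<forall>a b. le 0 a \<and> le 0 b \<longrightarrow> le 0 (a * b * a))
     \<comment> \<open>(SA4)\<close>
   \<and> (\<forall>a\<in>A. \<forall>b. le 0 b \<and> a * b * a = 0 \<longrightarrow> a * b = 0 \<and> b * a = 0)
     \<comment> \<open>(SA5)\<close>
   \<and> (\<forall>a. le 0 a \<longrightarrow> (\<exists>b. le 0 b \<and> b \<in> sa_CC A a \<and> b * b = a))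
     \<comment> \<open>(SA6)\<close>
   \<and> (\<forall>a\<in>A. \<exists>p\<in>A. p * p = p \<and> (\<forall>b\<in>A. a * b = 0 \<longleftrightarrow> p * b = 0))
     \<comment> \<open>(SA7)\<close>
   \<and> (\<forall>a. le 1 a \<longrightarrow> (\<exists>b\<in>A. a * b = 1 \<and> b * a = 1))
     \<comment> \<open>(SA8)\<close>
   \<and> (\<forall>a\<in>A. \<forall>b\<in>A. \<forall>f::nat \<Rightarrow> 'a.
        (\<forall>n. f n \<in> sa_C A b) \<and> (\<forall>m n. f m * f n = f n * f m)
        \<and> (\<forall>n. le (f n) (f (Suc n)))
        \<and> (\<lambda>n. sa_norm A le (a - f n)) \<longlonglongrightarrow> 0
        \<longrightarrow> a \<in> sa_C A b)"

definition sa_proj :: "'a::real_algebra_1 set \<Rightarrow> 'a \<Rightarrow> bool" where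
  "sa_proj A p \<longleftrightarrow> p \<in> A \<and> p * p = p"

definition sa_sqrt :: "'a::real_algebra_1 set \<Rightarrow> ('a \<Rightarrow> 'a \<Rightarrow> bool) \<Rightarrow> 'a \<Rightarrow> 'a" where
  "sa_sqrt A le a = (THE b. le 0 b \<and> b * b = a)"

definition sa_abs :: "'a::real_algebra_1 set \<Rightarrow> ('a \<Rightarrow> 'a \<Rightarrow> bool) \<Rightarrow> 'a \<Rightarrow> 'a" where
  "sa_abs A le a = sa_sqrt A le (a * a)"

definition sa_carrier :: "'a::real_algebra_1 set \<Rightarrow> 'a \<Rightarrow> 'a" where
  "sa_carrier A a = (THE p. sa_proj A p \<and> (\<forall>b\<in>A. a * b = 0 \<longleftrightarrow> p * b = 0))"

definition sa_signum :: "'a::real_algebra_1 set \<Rightarrow> ('a \<Rightarrow> 'a \<Rightarrow> bool) \<Rightarrow> 'a \<Rightarrow> 'a" where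
  "sa_signum A le a = (THE t. t \<in> A \<and> t * t = sa_carrier A a \<and> t \<in> sa_CC A a
       \<and> a = sa_abs A le a * t \<and> a = t * sa_abs A le a)"

definition sa_polar_sym :: "'a::real_algebra_1 set \<Rightarrow> ('a \<Rightarrow> 'a \<Rightarrow> bool) \<Rightarrow> 'a \<Rightarrow> 'a" where
  "sa_polar_sym A le a = sa_signum A le a + (1 - sa_carrier A a)"

end

theory Submission
  imports Defs
begin

text \<open>Write X = pqp + p'q'p', Y = pq'p + p'qp' and d = pqp' + p'qp, where
  p' = 1 - p. A computation valid for any two idempotents in any ring gives X + Y = 1,
  Xd = dX, XY = d^2 and q = Xp + d + Yp'. Since c = X^(1/2) and
  s = Y^(1/2) lie in bicommutants, c, s, d and the polar symmetry k of d
  all commute, and |d| = (XY)^(1/2) = cs, so d = |d|k = csk.\<close>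

lemma idempotent_pair_identities:
  fixes p q :: "'a::ring_1"
  assumes pp: "p * p = p" and qq: "q * q = q"
  defines "X \<equiv> p * q * p + (1 - p) * (1 - q) * (1 - p)"
    and "Y \<equiv> p * (1 - q) * p + (1 - p) * q * (1 - p)"
    and "d \<equiv> p * q * (1 - p) + (1 - p) * q * p"
  shows "X * p = p * q * p" "p * X = p * q * p"
    "Y * (1 - p) = (1 - p) * q * (1 - p)" "(1 - p) * Y = (1 - p) * q * (1 - p)"
    "X + Y = 1" "X * d = d * X" "X * Y = d * d"
    "q = X * p + d + Y * (1 - p)"
proof -
  have pp2: "p * (p * z) = p * z" and qq2: "q * (q * z) = q * z" for z
    using pp qq by (simp_all flip: mult.assoc)
  note simps = algebra_simps pp pp2 qq qq2
  show "X * p = p * q * p" "p * X = p * q * p" unfolding X_def by (simp_all add: simps)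
  show "Y * (1 - p) = (1 - p) * q * (1 - p)" "(1 - p) * Y = (1 - p) * q * (1 - p)"
    unfolding Y_def by (simp_all add: simps)
  show "X + Y = 1" "X * d = d * X" "X * Y = d * d" "q = X * p + d + Y * (1 - p)"
    unfolding X_def Y_def d_def by (simp_all add: simps)
qed

lemma square_commute:
  fixes a b :: "'a::semigroup_mult"
  assumes "a * b = b * a"
  shows "a * a * b = b * (a * a)"
  by (simp add: mult.assoc assms) (simp add: assms flip: mult.assoc)

lemma commuting_mult_square:
  fixes a b :: "'a::semigroup_mult"
  assumes "a * b = b * a"
  shows "(a * b) * (a * b) = (a * a) * (b * b)"
proof -
  have "(a * b) * (a * b) = a * (b * a) * b" by (simp add: mult.assoc)
  also have "\<dots> = (a * a) * (b * b)" by (simp only: assms[symmetric]) (simp add: mult.assoc)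
  finally show ?thesis .
qed

locale synaptic =
  fixes A :: "'a::real_algebra_1 set" and le :: "'a \<Rightarrow> 'a \<Rightarrow> bool"
  assumes one_mem: "1 \<in> A"
    and add_mem: "a \<in> A \<Longrightarrow> b \<in> A \<Longrightarrow> a + b \<in> A"
    and scaleR_mem: "a \<in> A \<Longrightarrow> r *\<^sub>R a \<in> A"
    and le_mem: "le a b \<Longrightarrow> a \<in> A \<and> b \<in> A"
    and le_antisym: "le a b \<Longrightarrow> le b a \<Longrightarrow> a = b"
    and le_trans: "le a b \<Longrightarrow> le b c \<Longrightarrow> le a c"
    and add_right_mono: "le a b \<Longrightarrow> c \<in> A \<Longrightarrow> le (a + c) (b + c)"
    and square_nonneg: "a \<in> A \<Longrightarrow> le 0 (a * a)"
    and sandwich_nonneg: "le 0 a \<Longrightarrow> le 0 b \<Longrightarrow> le 0 (a * b * a)"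
    and sandwich_eq_0: "a \<in> A \<Longrightarrow> le 0 b \<Longrightarrow> a * b * a = 0 \<Longrightarrow> a * b = 0 \<and> b * a = 0"
    and sqrt_exists: "le 0 a \<Longrightarrow> \<exists>b. le 0 b \<and> b \<in> sa_CC A a \<and> b * b = a"
    and carrier_exists:
      "a \<in> A \<Longrightarrow> \<exists>p\<in>A. p * p = p \<and> (\<forall>b\<in>A. a * b = 0 \<longleftrightarrow> p * b = 0)"

lemma synaptic_algebra_imp_synaptic: "synaptic_algebra A le \<Longrightarrow> synaptic A le"
  unfolding synaptic_algebra_def synaptic_def by (elim conjE) (intro conjI allI impI; metis)

context synaptic
begin

lemma nonneg_mem: "le 0 a \<Longrightarrow> a \<in> A"
  using le_mem by blast

lemma diff_mem: "a \<in> A \<Longrightarrow> b \<in> A \<Longrightarrow> a - b \<in> A"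
  using add_mem[of a "(-1) *\<^sub>R b"] scaleR_mem[of b "-1"] by simp

lemma one_diff_mem: "a \<in> A \<Longrightarrow> 1 - a \<in> A"
  by (simp add: diff_mem one_mem)

lemma square_mem: "a \<in> A \<Longrightarrow> a * a \<in> A"
  using square_nonneg nonneg_mem by blast

lemma jordan_mem: "a \<in> A \<Longrightarrow> b \<in> A \<Longrightarrow> a * b + b * a \<in> A"
proof -
  assume "a \<in> A" "b \<in> A"
  moreover have "a * b + b * a = (a + b) * (a + b) - a * a - b * b"
    by (simp add: algebra_simps)
  ultimately show ?thesis by (simp add: diff_mem add_mem square_mem)
qed

lemma commuting_mult_mem: "a \<in> A \<Longrightarrow> b \<in> A \<Longrightarrow> a * b = b * a \<Longrightarrow> a * b \<in> A"
  using jordan_mem[of a b] scaleR_mem[of "a * b + b * a" "1/2"] by (simp flip: scaleR_2)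

lemma sandwich_mem: "a \<in> A \<Longrightarrow> b \<in> A \<Longrightarrow> a * b * a \<in> A"
proof -
  assume a: "a \<in> A" and b: "b \<in> A"
  have "2 *\<^sub>R (a * b * a) = (a * (a * b + b * a) + (a * b + b * a) * a) - (a * a * b + b * (a * a))"
    by (simp add: algebra_simps scaleR_2)
  also have "\<dots> \<in> A" using a b by (intro diff_mem jordan_mem square_mem)
  finally have "(1/2) *\<^sub>R (2 *\<^sub>R (a * b * a)) \<in> A" by (rule scaleR_mem)
  then show ?thesis by simp
qed

lemma one_nonneg: "le 0 1"
  using square_nonneg[OF one_mem] by simp

lemma add_nonneg: "le 0 a \<Longrightarrow> le 0 b \<Longrightarrow> le 0 (a + b)"
  using add_right_mono[of 0 a b] le_trans[of 0 b "a + b"] nonneg_mem[of b] by simp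

lemma add_nonneg_eq_0: "le 0 a \<Longrightarrow> le 0 b \<Longrightarrow> a + b = 0 \<Longrightarrow> a = 0"
  using add_right_mono[of 0 b a] le_antisym[of a 0] nonneg_mem[of a] by (simp add: add.commute)

lemma square_eq_0: "a \<in> A \<Longrightarrow> a * a = 0 \<Longrightarrow> a = 0"
  using sandwich_eq_0[OF _ one_nonneg, of a] by simp

lemma mult_eq_0_commute:
  assumes "a \<in> A" and "le 0 b"
  shows "a * b = 0 \<longleftrightarrow> b * a = 0"
proof
  assume "a * b = 0"
  then show "b * a = 0" using sandwich_eq_0[OF assms] by simp
next
  assume "b * a = 0"
  then show "a * b = 0" using sandwich_eq_0[OF assms] by (simp add: mult.assoc)
qed

lemma proj_nonneg: "sa_proj A e \<Longrightarrow> le 0 e"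
  unfolding sa_proj_def using square_nonneg[of e] by simp

lemma proj_compl: "sa_proj A e \<Longrightarrow> sa_proj A (1 - e)"
  unfolding sa_proj_def by (auto simp: one_diff_mem algebra_simps)

lemma CC_commute: "b \<in> sa_CC A a \<Longrightarrow> d \<in> A \<Longrightarrow> a * d = d * a \<Longrightarrow> b * d = d * b"
  unfolding sa_CC_def sa_C_def by auto

lemma mult_nonneg_commuting: "le 0 a \<Longrightarrow> le 0 b \<Longrightarrow> a * b = b * a \<Longrightarrow> le 0 (a * b)"
proof -
  assume a: "le 0 a" and b: "le 0 b" and ab: "a * b = b * a"
  obtain w where w: "le 0 w" "w \<in> sa_CC A a" "w * w = a" using sqrt_exists[OF a] by blast
  have wb: "w * b = b * w" using CC_commute[OF w(2)] nonneg_mem[OF b] ab by blast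
  have "w * b * w = w * (w * b)" by (simp only: mult.assoc wb[symmetric])
  also have "\<dots> = a * b" using w(3) by (simp flip: mult.assoc)
  finally show ?thesis using sandwich_nonneg[OF w(1) b] by simp
qed

text \<open>Two nonnegative square roots of the same element agree as soon as one of them lies in
  the bicommutant: then both commute with their difference x, and x (b + r) = 0 splits
  into two nonnegative sandwiches.\<close>

lemma sqrt_unique:
  assumes b: "le 0 b" and r: "le 0 r" "r * r = b * b" "r \<in> sa_CC A (b * b)"
  shows "b = r"
proof -
  have bA: "b \<in> A" and rA: "r \<in> A" using b r(1) by (simp_all add: nonneg_mem)
  have rb: "r * b = b * r" using CC_commute[OF r(3) bA] by (simp add: mult.assoc)
  define x where "x = b - r"
  have xA: "x \<in> A" unfolding x_def using bA rA diff_mem by blast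
  have xb: "x * b = b * x" and xr: "x * r = r * x"
    unfolding x_def using rb by (simp_all add: algebra_simps)
  have nonneg: "le 0 (x * y * x)" if "le 0 y" "x * y = y * x" for y
  proof -
    have "x * y * x = x * x * y" by (simp only: mult.assoc that(2)[symmetric])
    then show ?thesis
      using mult_nonneg_commuting[OF square_nonneg[OF xA] that(1) square_commute[OF that(2)]] by simp
  qed
  have xb0: "le 0 (x * b * x)" and xr0: "le 0 (x * r * x)" using nonneg b r(1) xb xr by blast+
  have "x * b * x + x * r * x = x * (b + r) * x" by (simp add: algebra_simps)
  also have "\<dots> = 0" unfolding x_def using rb r(2) by (simp add: algebra_simps)
  finally have "x * b * x + x * r * x = 0" .
  then have "x * b * x = 0" "x * r * x = 0"
    using add_nonneg_eq_0[OF xb0 xr0] add_nonneg_eq_0[OF xr0 xb0] by (simp_all add: add.commute)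
  then have "x * b = 0" "x * r = 0" using sandwich_eq_0 xA b r(1) by blast+
  then have "x * x = 0" unfolding x_def by (simp add: algebra_simps)
  then have "x = 0" using square_eq_0[OF xA] by simp
  then show ?thesis unfolding x_def by simp
qed

lemma sqrt_props:
  assumes "le 0 a"
  shows "le 0 (sa_sqrt A le a)" "sa_sqrt A le a * sa_sqrt A le a = a"
    "sa_sqrt A le a \<in> sa_CC A a"
proof -
  obtain r where r: "le 0 r" "r \<in> sa_CC A a" "r * r = a" using sqrt_exists[OF assms] by blast
  have "sa_sqrt A le a = r"
    unfolding sa_sqrt_def using r sqrt_unique[of _ r] by (intro the_equality) auto
  then show "le 0 (sa_sqrt A le a)" "sa_sqrt A le a * sa_sqrt A le a = a"
    "sa_sqrt A le a \<in> sa_CC A a"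
    using r by simp_all
qed

lemma sqrt_square:
  assumes "le 0 b"
  shows "sa_sqrt A le (b * b) = b"
  using sqrt_unique[OF assms sqrt_props[OF square_nonneg[OF nonneg_mem[OF assms]]]] by simp

lemma sqrt_commute: "le 0 a \<Longrightarrow> d \<in> A \<Longrightarrow> a * d = d * a \<Longrightarrow> sa_sqrt A le a * d = d * sa_sqrt A le a"
  using CC_commute sqrt_props(3) by blast

lemma proj_absorb:
  assumes e: "sa_proj A e" and f: "sa_proj A f" and ef: "e * f = e"
  shows "f * e = e"
proof -
  have fA: "f \<in> A" using f unfolding sa_proj_def by simp
  have "(1 - f) * e * (1 - f) = (1 - f) * (e - e * f)" by (simp add: algebra_simps)
  then have "(1 - f) * e * (1 - f) = 0" using ef by simp
  then have "(1 - f) * e = 0" using sandwich_eq_0[OF one_diff_mem[OF fA] proj_nonneg[OF e]] by blast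
  then show ?thesis by (simp add: algebra_simps)
qed

lemma carrier_unique:
  assumes e: "sa_proj A e" and f: "sa_proj A f"
    and xe: "\<forall>b\<in>A. x * b = 0 \<longleftrightarrow> e * b = 0" and xf: "\<forall>b\<in>A. x * b = 0 \<longleftrightarrow> f * b = 0"
  shows "e = f"
proof -
  have "e * (1 - e) = 0" "f * (1 - f) = 0" using e f unfolding sa_proj_def by (simp_all add: algebra_simps)
  then have "f * (1 - e) = 0" "e * (1 - f) = 0"
    using xe xf e f one_diff_mem unfolding sa_proj_def by blast+
  then have "f * e = f" "e * f = e" by (simp_all add: algebra_simps)
  then show ?thesis using proj_absorb[OF f e] by simp
qed

lemma carrier_props:
  assumes "x \<in> A"
  shows "sa_proj A (sa_carrier A x)" "\<forall>b\<in>A. x * b = 0 \<longleftrightarrow> sa_carrier A x * b = 0"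
proof -
  obtain e where e: "sa_proj A e" "\<forall>b\<in>A. x * b = 0 \<longleftrightarrow> e * b = 0"
    using carrier_exists[OF assms] unfolding sa_proj_def by blast
  have "sa_carrier A x = e"
    unfolding sa_carrier_def using e carrier_unique[of _ e x] by (intro the_equality) auto
  then show "sa_proj A (sa_carrier A x)" "\<forall>b\<in>A. x * b = 0 \<longleftrightarrow> sa_carrier A x * b = 0"
    using e by simp_all
qed

lemma carrier_eqI:
  "x \<in> A \<Longrightarrow> sa_proj A e \<Longrightarrow> \<forall>b\<in>A. x * b = 0 \<longleftrightarrow> e * b = 0 \<Longrightarrow> sa_carrier A x = e"
  using carrier_unique carrier_props by blast

lemma carrier_mem: "x \<in> A \<Longrightarrow> sa_carrier A x \<in> A"
  and carrier_idem: "x \<in> A \<Longrightarrow> sa_carrier A x * sa_carrier A x = sa_carrier A x"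
  using carrier_props(1) unfolding sa_proj_def by blast+

lemma carrier_annihilates_iff: "x \<in> A \<Longrightarrow> b \<in> A \<Longrightarrow> x * b = 0 \<longleftrightarrow> sa_carrier A x * b = 0"
  using carrier_props(2) by blast

lemma mult_compl_carrier: "x \<in> A \<Longrightarrow> x * (1 - sa_carrier A x) = 0"
  using carrier_annihilates_iff[OF _ one_diff_mem[OF carrier_mem]] carrier_idem
  by (simp add: right_diff_distrib)

lemma proj_commuteI:
  assumes e: "sa_proj A e" and y: "y \<in> A" and eye: "e * y * (1 - e) = 0"
  shows "e * y = y * e"
proof -
  have eA: "e \<in> A" and ee: "e * e = e" using e unfolding sa_proj_def by auto
  have ee2: "e * (e * z) = e * z" for z using ee by (simp flip: mult.assoc)
  have ey: "e * y = e * y * e" using eye by (simp add: right_diff_distrib)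
  define v where "v = (1 - e) * y * e"
  have "v = y * e - e * y * e" unfolding v_def by (simp add: algebra_simps)
  also have "\<dots> = e * y + y * e - 2 *\<^sub>R (e * y * e)"
    by (subst (2) ey) (simp add: scaleR_2)
  finally have "v = e * y + y * e - 2 *\<^sub>R (e * y * e)" .
  then have vA: "v \<in> A" by (simp add: diff_mem jordan_mem scaleR_mem sandwich_mem eA y)
  have "v * v = (1 - e) * y * (e * (1 - e)) * y * e" unfolding v_def by (simp add: mult.assoc)
  then have "v * v = 0" using ee by (simp add: algebra_simps)
  then have "y * e = e * y * e" using square_eq_0[OF vA] unfolding v_def by (simp add: algebra_simps ee2)
  then show ?thesis using ey by simp
qed

lemma carrier_CC:
  assumes x: "x \<in> A"
  shows "sa_carrier A x \<in> sa_CC A x"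
proof -
  let ?e = "sa_carrier A x"
  have e: "sa_proj A ?e" using carrier_props(1)[OF x] .
  have "?e * y = y * ?e" if y: "y \<in> A" and xy: "x * y = y * x" for y
  proof -
    have xe: "x * (1 - ?e) = 0" using mult_compl_carrier[OF x] .
    have "x * y * (1 - ?e) = y * x * (1 - ?e)" using xy by simp
    then have "x * (y * (1 - ?e) + (1 - ?e) * y) = 0"
      using xe by (simp add: distrib_left flip: mult.assoc) (simp add: mult.assoc)
    then have "?e * (y * (1 - ?e) + (1 - ?e) * y) = 0"
      using carrier_annihilates_iff[OF x jordan_mem[OF y one_diff_mem[OF carrier_mem[OF x]]]] by simp
    moreover have "?e * (1 - ?e) = 0" using carrier_idem[OF x] by (simp add: algebra_simps)
    ultimately have "?e * y * (1 - ?e) = 0" by (simp add: distrib_left flip: mult.assoc)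
    then show ?thesis using proj_commuteI[OF e y] by blast
  qed
  then show ?thesis unfolding sa_CC_def sa_C_def using carrier_mem[OF x] by auto
qed

lemma square_annihilates:
  assumes x: "x \<in> A" and b: "b \<in> A" and xxb: "x * x * b = 0"
  shows "x * b = 0"
proof -
  let ?g = "sa_carrier A (x * x)"
  have xx: "x * x \<in> A" using square_mem[OF x] .
  have gx: "?g * x = x * ?g" using CC_commute[OF carrier_CC[OF xx] x] by (simp add: mult.assoc)
  then have c: "x * (1 - ?g) = (1 - ?g) * x" by (simp add: algebra_simps)
  have "(x * (1 - ?g)) * (x * (1 - ?g)) = x * x * ((1 - ?g) * (1 - ?g))"
    using commuting_mult_square[OF c] .
  also have "\<dots> = x * x * (1 - ?g)" using carrier_idem[OF xx] by (simp add: algebra_simps)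
  also have "\<dots> = 0" using mult_compl_carrier[OF xx] .
  finally have "x * (1 - ?g) = 0"
    using square_eq_0 commuting_mult_mem[OF x one_diff_mem[OF carrier_mem[OF xx]] c] by blast
  moreover have "?g * b = 0" using carrier_annihilates_iff[OF xx b] xxb by simp
  moreover have "x * b = x * (1 - ?g) * b + x * (?g * b)" by (simp add: algebra_simps)
  ultimately show ?thesis by simp
qed

lemma mult_carrier_eq_0: "a \<in> A \<Longrightarrow> b \<in> A \<Longrightarrow> b * a = 0 \<Longrightarrow> a * sa_carrier A b = 0"
  using carrier_annihilates_iff mult_eq_0_commute proj_nonneg carrier_props(1) by blast

lemma carrier_orthogonal:
  "a \<in> A \<Longrightarrow> b \<in> A \<Longrightarrow> b * a = 0 \<Longrightarrow> sa_carrier A a * sa_carrier A b = 0"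
  using mult_carrier_eq_0 carrier_annihilates_iff carrier_mem by blast

lemma carrier_uminus: "a \<in> A \<Longrightarrow> sa_carrier A (- a) = sa_carrier A a"
  using carrier_eqI[of "- a"] carrier_props[of a] scaleR_mem[of a "-1"] by simp

lemma carrier_add_orthogonal:
  assumes a: "a \<in> A" and b: "b \<in> A" and ab: "a * b = 0" and ba: "b * a = 0"
  shows "sa_carrier A (a + b) = sa_carrier A a + sa_carrier A b"
proof (rule carrier_eqI)
  let ?e = "sa_carrier A a" and ?f = "sa_carrier A b"
  have ef: "?e * ?f = 0" and fe: "?f * ?e = 0" using carrier_orthogonal a b ab ba by blast+
  have ee: "?e * ?e = ?e" and ff: "?f * ?f = ?f" using carrier_idem a b by blast+
  show "a + b \<in> A" using add_mem[OF a b] .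
  show "sa_proj A (?e + ?f)"
    unfolding sa_proj_def using add_mem carrier_mem a b ee ff ef fe by (simp add: algebra_simps)
  show "\<forall>c\<in>A. (a + b) * c = 0 \<longleftrightarrow> (?e + ?f) * c = 0"
  proof
    fix c assume c: "c \<in> A"
    have "(a + b) * c = 0 \<longleftrightarrow> a * c = 0 \<and> b * c = 0"
    proof
      assume abc: "(a + b) * c = 0"
      have "a * ((a + b) * c) = 0" "b * ((a + b) * c) = 0" using abc by simp_all
      moreover have "a * (b * c) = 0" "b * (a * c) = 0" using ab ba by (simp_all flip: mult.assoc)
      ultimately have "a * a * c = 0" "b * b * c = 0" by (simp_all add: algebra_simps)
      then show "a * c = 0 \<and> b * c = 0" using square_annihilates a b c by blast
    qed (simp add: distrib_right)
    moreover have "(?e + ?f) * c = 0 \<longleftrightarrow> ?e * c = 0 \<and> ?f * c = 0"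
    proof
      assume efc: "(?e + ?f) * c = 0"
      have "?e * ((?e + ?f) * c) = ?e * c" "?f * ((?e + ?f) * c) = ?f * c"
        using ee ff ef fe by (simp_all add: distrib_left distrib_right flip: mult.assoc)
      then show "?e * c = 0 \<and> ?f * c = 0" using efc by simp
    qed (simp add: distrib_right)
    ultimately show "(a + b) * c = 0 \<longleftrightarrow> (?e + ?f) * c = 0"
      using carrier_annihilates_iff a b c by blast
  qed
qed

lemma abs_props:
  assumes x: "x \<in> A"
  shows "le 0 (sa_abs A le x)" "sa_abs A le x * sa_abs A le x = x * x"
    "sa_abs A le x \<in> sa_CC A (x * x)" "sa_abs A le x * x = x * sa_abs A le x"
proof -
  show u: "le 0 (sa_abs A le x)" "sa_abs A le x * sa_abs A le x = x * x"
    and uC: "sa_abs A le x \<in> sa_CC A (x * x)"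
    unfolding sa_abs_def using sqrt_props square_nonneg x by blast+
  show "sa_abs A le x * x = x * sa_abs A le x"
    using CC_commute[OF uC x] by (simp add: mult.assoc)
qed

lemma sqrt_mult_commute:
  assumes a: "le 0 a" and b: "le 0 b" and ab: "a * b = b * a"
  shows "sa_sqrt A le a * sa_sqrt A le b = sa_sqrt A le b * sa_sqrt A le a"
proof -
  have "sa_sqrt A le b * a = a * sa_sqrt A le b"
    using sqrt_commute[OF b nonneg_mem[OF a]] ab by simp
  then show ?thesis using sqrt_commute[OF a nonneg_mem[OF sqrt_props(1)[OF b]]] by simp
qed

lemma abs_eq_sqrt_mult:
  assumes a: "le 0 a" and b: "le 0 b" and ab: "a * b = b * a" and d: "d * d = a * b"
  shows "sa_abs A le d = sa_sqrt A le a * sa_sqrt A le b"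
proof -
  let ?r = "sa_sqrt A le a" and ?s = "sa_sqrt A le b"
  have rs: "?r * ?s = ?s * ?r" using sqrt_mult_commute[OF a b ab] .
  have "d * d = (?r * ?s) * (?r * ?s)"
    unfolding commuting_mult_square[OF rs] using d sqrt_props(2) a b by simp
  moreover have "le 0 (?r * ?s)" using mult_nonneg_commuting sqrt_props(1) a b rs by blast
  ultimately show ?thesis unfolding sa_abs_def using sqrt_square by simp
qed

definition is_signum :: "'a \<Rightarrow> 'a \<Rightarrow> bool" where
  "is_signum x t \<longleftrightarrow> t \<in> A \<and> t * t = sa_carrier A x \<and> t \<in> sa_CC A x
     \<and> x = sa_abs A le x * t \<and> x = t * sa_abs A le x"

lemma signum_mult_carrier:
  assumes x: "x \<in> A" and t: "is_signum x t"
  shows "t * sa_carrier A x = t" "sa_carrier A x * t = t"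
proof -
  let ?e = "sa_carrier A x"
  have tA: "t \<in> A" and tt: "t * t = ?e" using t unfolding is_signum_def by auto
  have te: "t * ?e = ?e * t" unfolding tt[symmetric] by (simp add: mult.assoc)
  then have c: "t * (1 - ?e) = (1 - ?e) * t" by (simp add: algebra_simps)
  have "(t * (1 - ?e)) * (t * (1 - ?e)) = t * t * ((1 - ?e) * (1 - ?e))"
    using commuting_mult_square[OF c] .
  also have "\<dots> = 0" using tt carrier_idem[OF x] by (simp add: algebra_simps)
  finally have "t * (1 - ?e) = 0"
    using square_eq_0 commuting_mult_mem[OF tA one_diff_mem[OF carrier_mem[OF x]] c] by blast
  then show "t * ?e = t" "?e * t = t" using te by (simp_all add: algebra_simps)
qed

lemma signum_unique:
  assumes x: "x \<in> A" and t: "is_signum x t" and t': "is_signum x t'"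
  shows "t = t'"
proof -
  define u where "u = sa_abs A le x"
  have tA: "t \<in> A" and t'A: "t' \<in> A" and ut: "u * t = x" and ut': "u * t' = x" and tu: "t * u = x"
    using t t' unfolding is_signum_def u_def[symmetric] by auto
  have "x * (t - t') = t * (u * t - u * t')" unfolding tu[symmetric] by (simp add: algebra_simps)
  then have "x * (t - t') = 0" unfolding ut ut' by simp
  then have "sa_carrier A x * t = sa_carrier A x * t'"
    using carrier_annihilates_iff[OF x diff_mem[OF tA t'A]] by (simp add: algebra_simps)
  then show ?thesis using signum_mult_carrier[OF x t] signum_mult_carrier[OF x t'] by simp
qed

text \<open>The signum is the difference of the carriers of the positive and negative parts
  (|x| + x)/2 and (|x| - x)/2, which annihilate each other.\<close>

lemma signum_exists:
  assumes x: "x \<in> A"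
  shows "\<exists>t. is_signum x t"
proof -
  define u where "u = sa_abs A le x"
  have u: "le 0 u" "u * u = x * x" "u \<in> sa_CC A (x * x)" "u * x = x * u"
    unfolding u_def using abs_props[OF x] by blast+
  have uA: "u \<in> A" using nonneg_mem[OF u(1)] .
  define a where "a = (1/2) *\<^sub>R (u + x)"
  define b where "b = (1/2) *\<^sub>R (u - x)"
  have aA: "a \<in> A" and bA: "b \<in> A"
    unfolding a_def b_def using scaleR_mem add_mem diff_mem uA x by blast+
  have bA': "- b \<in> A" using scaleR_mem[OF bA, of "-1"] by simp
  have u_ab: "u = a + b" and x_ab: "x = a - b"
    unfolding a_def b_def by (simp_all add: algebra_simps flip: scaleR_2)
  have "(u + x) * (u - x) = 0" "(u - x) * (u + x) = 0" using u(2,4) by (simp_all add: algebra_simps)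
  then have ab: "a * b = 0" and ba: "b * a = 0" unfolding a_def b_def by simp_all
  define e where "e = sa_carrier A a"
  define f where "f = sa_carrier A b"
  have eA: "e \<in> A" and fA: "f \<in> A" unfolding e_def f_def using carrier_mem aA bA by blast+
  have ee: "e * e = e" and ff: "f * f = f" unfolding e_def f_def using carrier_idem aA bA by blast+
  have ef: "e * f = 0" and fe: "f * e = 0"
    unfolding e_def f_def using carrier_orthogonal[OF aA bA ba] carrier_orthogonal[OF bA aA ab] .
  have "a * (1 - e) = 0" "b * (1 - f) = 0" unfolding e_def f_def using mult_compl_carrier aA bA by blast+
  then have ae: "a * e = a" and bf: "b * f = b" by (simp_all add: right_diff_distrib)
  have af: "a * f = 0" and be: "b * e = 0"
    unfolding e_def f_def using mult_carrier_eq_0[OF aA bA ba] mult_carrier_eq_0[OF bA aA ab] .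
  have ut: "u * (e - f) = x" unfolding u_ab x_ab using ae bf af be by (simp add: algebra_simps)
  have "sa_carrier A x = sa_carrier A a + sa_carrier A (- b)"
    using carrier_add_orthogonal[OF aA bA'] ab ba x_ab by simp
  then have carrier_x: "sa_carrier A x = e + f" unfolding e_def f_def carrier_uminus[OF bA] .
  have commute: "(e - f) * y = y * (e - f)" if y: "y \<in> A" and xy: "x * y = y * x" for y
  proof -
    have "u * y = y * u" using CC_commute[OF u(3) y square_commute[OF xy]] .
    then have "a * y = y * a" "b * y = y * b" unfolding a_def b_def using xy by (simp_all add: algebra_simps)
    then have "e * y = y * e" "f * y = y * f"
      unfolding e_def f_def using CC_commute[OF carrier_CC[OF aA] y] CC_commute[OF carrier_CC[OF bA] y]
      by simp_all
    then show ?thesis by (simp add: algebra_simps)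
  qed
  have CC: "e - f \<in> sa_CC A x"
    unfolding sa_CC_def sa_C_def using commute diff_mem[OF eA fA] by simp
  have "is_signum x (e - f)"
    unfolding is_signum_def u_def[symmetric]
  proof (intro conjI)
    show "e - f \<in> A" using diff_mem[OF eA fA] .
    show "(e - f) * (e - f) = sa_carrier A x"
      unfolding carrier_x using ee ff ef fe by (simp add: algebra_simps)
    show "e - f \<in> sa_CC A x" using CC .
    show "x = u * (e - f)" using ut by simp
    show "x = (e - f) * u" using ut CC_commute[OF CC uA u(4)[symmetric]] by simp
  qed
  then show ?thesis by blast
qed

lemma signum_is_signum:
  assumes x: "x \<in> A"
  shows "is_signum x (sa_signum A le x)"
proof -
  obtain t where t: "is_signum x t" using signum_exists[OF x] by blast
  have "sa_signum A le x = t"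
    unfolding sa_signum_def is_signum_def[symmetric]
    using t signum_unique[OF x _ t] by (rule the_equality)
  then show ?thesis using t by simp
qed

lemma polar_sym_props:
  assumes x: "x \<in> A"
  defines "k \<equiv> sa_polar_sym A le x"
  shows "k \<in> A" "k * k = 1" "k \<in> sa_CC A x" "x = sa_abs A le x * k"
    "sa_abs A le x * k = k * sa_abs A le x"
proof -
  let ?t = "sa_signum A le x" and ?e = "sa_carrier A x" and ?u = "sa_abs A le x"
  have t: "is_signum x ?t" using signum_is_signum[OF x] .
  have tA: "?t \<in> A" and tt: "?t * ?t = ?e" and tC: "?t \<in> sa_CC A x" and ut: "x = ?u * ?t"
    using t unfolding is_signum_def by auto
  have te: "?t * ?e = ?t" "?e * ?t = ?t" using signum_mult_carrier[OF x t] by auto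
  have u: "le 0 ?u" "?u * ?u = x * x" "?u * x = x * ?u" using abs_props[OF x] by auto
  have k: "k = ?t + (1 - ?e)" unfolding k_def sa_polar_sym_def ..
  show "k \<in> A" unfolding k using add_mem[OF tA one_diff_mem[OF carrier_mem[OF x]]] .
  show "k * k = 1" unfolding k using te tt carrier_idem[OF x] by (simp add: algebra_simps)
  have commute_e: "?e * y = y * ?e" if "?t * y = y * ?t" for y
    unfolding tt[symmetric] using square_commute[OF that] by (simp add: mult.assoc)
  show "k \<in> sa_CC A x"
    using CC_commute[OF tC] commute_e \<open>k \<in> A\<close> unfolding k sa_CC_def sa_C_def
    by (auto simp: algebra_simps)
  have "x * x * (1 - ?e) = 0" using mult_compl_carrier[OF x] by (simp add: mult.assoc)
  then have "?u * (1 - ?e) = 0"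
    using square_annihilates[OF nonneg_mem[OF u(1)] one_diff_mem[OF carrier_mem[OF x]]] u(2) by simp
  then show "x = ?u * k" unfolding k using ut by (simp add: distrib_left)
  have "?t * ?u = ?u * ?t" using CC_commute[OF tC nonneg_mem[OF u(1)] u(3)[symmetric]] .
  then show "?u * k = k * ?u" unfolding k using commute_e by (simp add: algebra_simps)
qed

lemma proj_sandwich_add_nonneg:
  assumes "sa_proj A p" and "le 0 a" and "le 0 b"
  shows "le 0 (p * a * p + (1 - p) * b * (1 - p))"
proof -
  have "le 0 p" "le 0 (1 - p)" using proj_nonneg proj_compl assms(1) by blast+
  then show ?thesis using add_nonneg sandwich_nonneg assms(2,3) by blast
qed

lemma polar_decomposition_sqrt_mult:
  assumes X: "le 0 X" and Y: "le 0 Y" and XY: "X * Y = Y * X" and d: "d \<in> A"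
    and dd: "d * d = X * Y" and Xd: "X * d = d * X" and Yd: "Y * d = d * Y"
  defines "c \<equiv> sa_sqrt A le X" and "s \<equiv> sa_sqrt A le Y" and "k \<equiv> sa_polar_sym A le d"
  shows "d = c * s * k" "c * s * k = k * (c * s)" "c * s = sa_abs A le d"
    "k \<in> A" "k * k = 1" "c * s = s * c" "c * k = k * c" "s * k = k * s" "k \<in> sa_CC A d"
proof -
  have cA: "c \<in> A" and sA: "s \<in> A" unfolding c_def s_def using sqrt_props X Y nonneg_mem by blast+
  have cd: "c * d = d * c" unfolding c_def using sqrt_commute[OF X d Xd] .
  have sd: "s * d = d * s" unfolding s_def using sqrt_commute[OF Y d Yd] .
  have abs_d: "sa_abs A le d = c * s" unfolding c_def s_def using abs_eq_sqrt_mult[OF X Y XY dd] .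
  note k = polar_sym_props[OF d, folded k_def, unfolded abs_d]
  show "d = c * s * k" "c * s * k = k * (c * s)" "c * s = sa_abs A le d"
    "k \<in> A" "k * k = 1" "k \<in> sa_CC A d"
    using k abs_d by simp_all
  show "c * s = s * c" unfolding c_def s_def using sqrt_mult_commute[OF X Y XY] .
  show "c * k = k * c" "s * k = k * s"
    using CC_commute[OF k(3) cA cd[symmetric]] CC_commute[OF k(3) sA sd[symmetric]] by simp_all
qed

end

theorem theorem5p6:
  fixes A :: "'a::real_algebra_1 set" and le :: "'a \<Rightarrow> 'a \<Rightarrow> bool"
    and p q c s k :: 'a
  assumes SA: "synaptic_algebra A le"
    and p: "sa_proj A p" and q: "sa_proj A q"
    and c_def: "c = sa_sqrt A le (p * q * p + (1 - p) * (1 - q) * (1 - p))"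
    and s_def: "s = sa_sqrt A le (p * (1 - q) * p + (1 - p) * q * (1 - p))"
    and k_def: "k = sa_polar_sym A le (p * q * (1 - p) + (1 - p) * q * p)"
  shows "q = c * c * p + c * s * k + s * s * (1 - p)
    \<and> p * q * p = c * c * p \<and> c * c * p = p * (c * c)
    \<and> (1 - p) * q * (1 - p) = s * s * (1 - p) \<and> s * s * (1 - p) = (1 - p) * (s * s)
    \<and> p * q * (1 - p) + (1 - p) * q * p = c * s * k
    \<and> c * s * k = k * (c * s)
    \<and> c * s = sa_abs A le (p * q * (1 - p) + (1 - p) * q * p)
    \<and> k \<in> A \<and> k * k = 1
    \<and> c * s = s * c \<and> c * k = k * c \<and> s * k = k * s
    \<and> k \<in> sa_CC A (p * q * (1 - p) + (1 - p) * q * p)"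
proof -
  interpret synaptic A le using synaptic_algebra_imp_synaptic[OF SA] .
  define X where "X = p * q * p + (1 - p) * (1 - q) * (1 - p)"
  define Y where "Y = p * (1 - q) * p + (1 - p) * q * (1 - p)"
  define d where "d = p * q * (1 - p) + (1 - p) * q * p"
  have pA: "p \<in> A" and pp: "p * p = p" and qA: "q \<in> A" and qq: "q * q = q"
    using p q unfolding sa_proj_def by auto
  note ids = idempotent_pair_identities[OF pp qq, folded X_def Y_def d_def]
  have X: "le 0 X" and Y: "le 0 Y" unfolding X_def Y_def
    using proj_sandwich_add_nonneg proj_nonneg proj_compl p q by blast+
  have "d = q - p * q * p - (1 - p) * q * (1 - p)" unfolding d_def by (simp add: algebra_simps)
  then have dA: "d \<in> A" by (simp add: diff_mem sandwich_mem pA qA one_diff_mem)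
  have Y_eq: "Y = 1 - X" using ids(5) by (simp add: algebra_simps)
  have XY: "X * Y = Y * X" and Yd: "Y * d = d * Y"
    unfolding Y_eq using ids(6) by (simp_all add: algebra_simps)
  note polar = polar_decomposition_sqrt_mult[OF X Y XY dA ids(7)[symmetric] ids(6) Yd,
      folded c_def[folded X_def] s_def[folded Y_def] k_def[folded d_def]]
  have cc: "c * c = X" and ss: "s * s = Y"
    unfolding c_def[folded X_def] s_def[folded Y_def] using sqrt_props(2) X Y by blast+
  have q_eq: "q = c * c * p + c * s * k + s * s * (1 - p)"
    unfolding cc ss polar(1)[symmetric] by (rule ids(8))
  have compressions: "p * q * p = c * c * p" "c * c * p = p * (c * c)"
    "(1 - p) * q * (1 - p) = s * s * (1 - p)" "s * s * (1 - p) = (1 - p) * (s * s)"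
    unfolding cc ss using ids(1-4) by simp_all
  show ?thesis unfolding d_def[symmetric] by (intro conjI) (fact q_eq compressions polar)+
qed

end
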